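(* Let $(X_B,X_C,X_R)$ be an OCC of a graph $G$, let $f_X$ be a proper $2$-coloring of $G[X_B]$, let $B^\ast \subseteq X_B$ satisfy property $(\star)$, and let $G'$ be the reduced graph. Let $Y \subseteq V(G) \cap V(G')$ be arbitrary. Then there is a closed walk of odd length $F$ in $G$ with $V(F) \cap V(G) \cap V(G') = Y$ if and only if there is a closed walk of odd length $F'$ in $G'$ with $V(F') \cap V(G) \cap V(G') = Y$.
   Context: An odd cycle cut (OCC) of $G$ is a partition $(X_B, X_C, X_R)$ of $V(G)$ such that $G[X_B]$ is bipartite, there is no edge between $X_B$ and $X_R$, and $X_B \cup X_C \neq \emptyset$. Auxiliary graph: $G_{\mathrm{aux}}$ is obtained from a copy of $G[X_B]$ by adding, for each $v \in X_C$, new vertices $v^{(0)}, v^{(1)}$ and, for each $u \in N_G(v) \cap X_B$, the edge $v^{(f_X(u))}u$; $T := \{v^{(i)} : v \in X_C, i \in \{0,1\}\}$. Property $(\star)$ of $B^\ast \subseteq X_B$: for every partition $(T_1,T_2,T_3,T_X)$ of $T$ into four possibly empty parts, if there exists $S \subseteq X_B$ with $|S| \le |T|$ separating $T_i$ and $T_j$ (no connected component of $G_{\mathrm{aux}} - T_X - S$ meets both) for all $1 \le i < j \le 3$, then $B^\ast$ contains such a set $S$ of minimum possible size. Reduced graph $G'$: start from $G - (X_B \setminus B^\ast)$; then, for every unordered pair $\{u,v\}$ of (not necessarily distinct) vertices of $X_C \cup B^\ast$ and every parity $p \in \{\text{even},\text{odd}\}$ such that $G$ contains a $(u,v)$-walk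 of length of parity $p$ that has at least one internal vertex and all of whose internal vertices lie in $X_B \setminus B^\ast$: if $p$ is even, add two new vertices $x, x'$, each adjacent to exactly $u$ and $v$; if $p$ is odd, add four new vertices $x,y,x',y'$ and the edges $ux, xy, yv, ux', x'y', y'v$. All added vertices are distinct and new. Thus $V(G) \cap V(G') = V(G) \setminus (X_B \setminus B^\ast)$. *)

theory Defs
  imports Main "HOL-Library.Uprod"
begin

definition simple_graph :: "'a set \<Rightarrow> ('a \<Rightarrow> 'a \<Rightarrow> bool) \<Rightarrow> bool" where
  "simple_graph V E \<longleftrightarrow> finite V \<and> (\<forall>u w. E u w \<longrightarrow> u \<in> V \<and> w \<in> V \<and> u \<noteq> w \<and> E w u)"

definition is_walk :: "'a set \<Rightarrow> ('a \<Rightarrow> 'a \<Rightarrow> bool) \<Rightarrow> 'a list \<Rightarrow> bool" where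
  "is_walk V E xs \<longleftrightarrow> xs \<noteq> [] \<and> set xs \<subseteq> V \<and> successively E xs"

definition walk_length :: "'a list \<Rightarrow> nat" where
  "walk_length xs = length xs - 1"

definition closed_odd_walk :: "'a set \<Rightarrow> ('a \<Rightarrow> 'a \<Rightarrow> bool) \<Rightarrow> 'a list \<Rightarrow> bool" where
  "closed_odd_walk V E xs \<longleftrightarrow> is_walk V E xs \<and> hd xs = last xs \<and> odd (walk_length xs)"

definition proper_2col :: "('a \<Rightarrow> 'a \<Rightarrow> bool) \<Rightarrow> 'a set \<Rightarrow> ('a \<Rightarrow> bool) \<Rightarrow> bool" where
  "proper_2col E A f \<longleftrightarrow> (\<forall>u\<in>A. \<forall>w\<in>A. E u w \<longrightarrow> f u \<noteq> f w)"

definition bipartite_on :: "('a \<Rightarrow> 'a \<Rightarrow> bool) \<Rightarrow> 'a set \<Rightarrow> bool" where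
  "bipartite_on E A \<longleftrightarrow> (\<exists>f :: 'a \<Rightarrow> bool. proper_2col E A f)"

definition is_OCC :: "'a set \<Rightarrow> ('a \<Rightarrow> 'a \<Rightarrow> bool) \<Rightarrow> 'a set \<Rightarrow> 'a set \<Rightarrow> 'a set \<Rightarrow> bool" where
  "is_OCC V E XB XC XR \<longleftrightarrow>
     XB \<union> XC \<union> XR = V \<and> XB \<inter> XC = {} \<and> XB \<inter> XR = {} \<and> XC \<inter> XR = {} \<and>
     bipartite_on E XB \<and> (\<forall>u\<in>XB. \<forall>w\<in>XR. \<not> E u w) \<and> XB \<union> XC \<noteq> {}"

text \<open>Vertices of G_aux: Inl u for u in XB (copy of G[XB]); Inr (v,i) is v^(i) for v in XC,
  with colour i :: bool (False = 0, True = 1).\<close>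
definition aux_V :: "'a set \<Rightarrow> 'a set \<Rightarrow> ('a + 'a \<times> bool) set" where
  "aux_V XB XC = Inl ` XB \<union> Inr ` (XC \<times> UNIV)"

definition aux_T :: "'a set \<Rightarrow> ('a + 'a \<times> bool) set" where
  "aux_T XC = Inr ` (XC \<times> UNIV)"

fun aux_base :: "('a \<Rightarrow> 'a \<Rightarrow> bool) \<Rightarrow> 'a set \<Rightarrow> 'a set \<Rightarrow> ('a \<Rightarrow> bool)
    \<Rightarrow> ('a + 'a \<times> bool) \<Rightarrow> ('a + 'a \<times> bool) \<Rightarrow> bool" where
  "aux_base E XB XC f (Inl u) (Inl w) = (u \<in> XB \<and> w \<in> XB \<and> E u w)"
| "aux_base E XB XC f (Inr (v, i)) (Inl u) = (v \<in> XC \<and> u \<in> XB \<and> E v u \<and> i = f u)"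
| "aux_base E XB XC f _ _ = False"

definition aux_E :: "('a \<Rightarrow> 'a \<Rightarrow> bool) \<Rightarrow> 'a set \<Rightarrow> 'a set \<Rightarrow> ('a \<Rightarrow> bool)
    \<Rightarrow> ('a + 'a \<times> bool) \<Rightarrow> ('a + 'a \<times> bool) \<Rightarrow> bool" where
  "aux_E E XB XC f x y \<longleftrightarrow> aux_base E XB XC f x y \<or> aux_base E XB XC f y x"

definition connected_in :: "'b set \<Rightarrow> ('b \<Rightarrow> 'b \<Rightarrow> bool) \<Rightarrow> 'b \<Rightarrow> 'b \<Rightarrow> bool" where
  "connected_in W R a b \<longleftrightarrow> a \<in> W \<and> b \<in> W \<and> (\<lambda>x y. R x y \<and> x \<in> W \<and> y \<in> W)\<^sup>*\<^sup>* a b"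

definition aux_separates :: "('a \<Rightarrow> 'a \<Rightarrow> bool) \<Rightarrow> 'a set \<Rightarrow> 'a set \<Rightarrow> ('a \<Rightarrow> bool)
    \<Rightarrow> ('a + 'a \<times> bool) set \<Rightarrow> 'a set \<Rightarrow> ('a + 'a \<times> bool) set \<Rightarrow> ('a + 'a \<times> bool) set \<Rightarrow> bool" where
  "aux_separates E XB XC f TX S A B \<longleftrightarrow>
     \<not> (\<exists>a\<in>A. \<exists>b\<in>B. connected_in (aux_V XB XC - TX - Inl ` S) (aux_E E XB XC f) a b)"

definition aux_sep3 :: "('a \<Rightarrow> 'a \<Rightarrow> bool) \<Rightarrow> 'a set \<Rightarrow> 'a set \<Rightarrow> ('a \<Rightarrow> bool)
    \<Rightarrow> ('a + 'a \<times> bool) set \<Rightarrow> ('a + 'a \<times> bool) set \<Rightarrow> ('a + 'a \<times> bool) set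
    \<Rightarrow> ('a + 'a \<times> bool) set \<Rightarrow> 'a set \<Rightarrow> bool" where
  "aux_sep3 E XB XC f T1 T2 T3 TX S \<longleftrightarrow>
     aux_separates E XB XC f TX S T1 T2 \<and> aux_separates E XB XC f TX S T1 T3 \<and>
     aux_separates E XB XC f TX S T2 T3"

definition star_prop :: "('a \<Rightarrow> 'a \<Rightarrow> bool) \<Rightarrow> 'a set \<Rightarrow> 'a set \<Rightarrow> ('a \<Rightarrow> bool) \<Rightarrow> 'a set \<Rightarrow> bool" where
  "star_prop E XB XC f Bs \<longleftrightarrow>
     (\<forall>T1 T2 T3 TX.
        T1 \<union> T2 \<union> T3 \<union> TX = aux_T XC \<and>
        T1 \<inter> T2 = {} \<and> T1 \<inter> T3 = {} \<and> T1 \<inter> TX = {} \<and>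
        T2 \<inter> T3 = {} \<and> T2 \<inter> TX = {} \<and> T3 \<inter> TX = {} \<and>
        (\<exists>S. S \<subseteq> XB \<and> card S \<le> card (aux_T XC) \<and> aux_sep3 E XB XC f T1 T2 T3 TX S)
      \<longrightarrow> (\<exists>S. S \<subseteq> Bs \<and> aux_sep3 E XB XC f T1 T2 T3 TX S \<and>
              (\<forall>S'. S' \<subseteq> XB \<and> aux_sep3 E XB XC f T1 T2 T3 TX S' \<longrightarrow> card S \<le> card S')))"

text \<open>Vertices of G': Old v for surviving vertices of G; New P odd c k for the added vertices
  belonging to the unordered pair P and parity odd (True = odd). Even gadget: New P False c 0,
  c \<in> {0,1} (the vertices x, x'). Odd gadget: New P True c 0 and New P True c 1 are x,y (c = 0)
  resp. x',y' (c = 1), where x is attached to the first and y to the second component of a fixed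
  ordered representative of P.\<close>
datatype 'a rvert = Old 'a | New "'a uprod" bool nat nat

definition has_inner_walk :: "('a \<Rightarrow> 'a \<Rightarrow> bool) \<Rightarrow> 'a set \<Rightarrow> 'a \<Rightarrow> 'a \<Rightarrow> bool \<Rightarrow> bool" where
  "has_inner_walk E I u v podd \<longleftrightarrow>
     (\<exists>ws. ws \<noteq> [] \<and> set ws \<subseteq> I \<and> successively E (u # ws @ [v]) \<and>
          odd (walk_length (u # ws @ [v])) = podd)"

definition gadget :: "('a \<Rightarrow> 'a \<Rightarrow> bool) \<Rightarrow> 'a set \<Rightarrow> 'a set \<Rightarrow> 'a set \<Rightarrow> 'a uprod \<Rightarrow> bool \<Rightarrow> bool" where
  "gadget E XB XC Bs P podd \<longleftrightarrow>
     (\<exists>u v. P = Upair u v \<and> u \<in> XC \<union> Bs \<and> v \<in> XC \<union> Bs \<and> has_inner_walk E (XB - Bs) u v podd)"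

definition rep :: "'a uprod \<Rightarrow> 'a \<times> 'a" where
  "rep P = (SOME (a, b). P = Upair a b)"

definition red_V :: "'a set \<Rightarrow> ('a \<Rightarrow> 'a \<Rightarrow> bool) \<Rightarrow> 'a set \<Rightarrow> 'a set \<Rightarrow> 'a set \<Rightarrow> 'a rvert set" where
  "red_V V E XB XC Bs =
     Old ` (V - (XB - Bs)) \<union>
     {New P False c 0 | P c. gadget E XB XC Bs P False \<and> c < 2} \<union>
     {New P True c k | P c k. gadget E XB XC Bs P True \<and> c < 2 \<and> k < 2}"

fun red_base :: "'a set \<Rightarrow> ('a \<Rightarrow> 'a \<Rightarrow> bool) \<Rightarrow> 'a set \<Rightarrow> 'a set \<Rightarrow> 'a set
    \<Rightarrow> 'a rvert \<Rightarrow> 'a rvert \<Rightarrow> bool" where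
  "red_base V E XB XC Bs (Old a) (Old b) = (a \<in> V - (XB - Bs) \<and> b \<in> V - (XB - Bs) \<and> E a b)"
| "red_base V E XB XC Bs (New P False c k) (Old a) =
     (gadget E XB XC Bs P False \<and> c < 2 \<and> k = 0 \<and> (a = fst (rep P) \<or> a = snd (rep P)))"
| "red_base V E XB XC Bs (New P True c k) (Old a) =
     (gadget E XB XC Bs P True \<and> c < 2 \<and>
      ((k = 0 \<and> a = fst (rep P)) \<or> (k = 1 \<and> a = snd (rep P))))"
| "red_base V E XB XC Bs (New P True c k) (New Q True d l) =
     (gadget E XB XC Bs P True \<and> Q = P \<and> c < 2 \<and> d = c \<and> k = 0 \<and> l = 1)"
| "red_base V E XB XC Bs _ _ = False"

definition red_E :: "'a set \<Rightarrow> ('a \<Rightarrow> 'a \<Rightarrow> bool) \<Rightarrow> 'a set \<Rightarrow> 'a set \<Rightarrow> 'a set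
    \<Rightarrow> 'a rvert \<Rightarrow> 'a rvert \<Rightarrow> bool" where
  "red_E V E XB XC Bs x y \<longleftrightarrow> red_base V E XB XC Bs x y \<or> red_base V E XB XC Bs y x"

end

theory Submission
  imports Defs
begin

(* Cut a closed odd walk of G at its visits to the kept vertices V(G) \<inter> V(G').  Between two
  consecutive visits it either uses one edge of G or makes an excursion through X_B - B*; since
  X_B has no neighbours in X_R, such an excursion joins two vertices of X_C \<union> B*, so the gadget
  of its parity exists in G' and can replace it.  Conversely, every passage through a gadget
  expands back into the excursion that created it.  Both translations keep the parity and the set
  of kept vertices visited.  Finally, no closed odd walk avoids the kept vertices: in G it would
  live in the bipartite graph G[X_B], in G' inside the gadgets, which are bipartite too. *)

section \<open>Walks up to parity and vertex set\<close>

(* Only the end points, the parity of the length (True = odd) and the vertex set of a walk are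
  observed by the statement; forgetting the order makes walks easy to cut and glue. *)
inductive parity_walk :: "'v set \<Rightarrow> ('v \<Rightarrow> 'v \<Rightarrow> bool) \<Rightarrow> 'v \<Rightarrow> 'v \<Rightarrow> bool \<Rightarrow> 'v set \<Rightarrow> bool"
  for V E where
  parity_walk_single: "a \<in> V \<Longrightarrow> parity_walk V E a a False {a}"
| parity_walk_snoc: "parity_walk V E a b p S \<Longrightarrow> E b c \<Longrightarrow> c \<in> V \<Longrightarrow>
    parity_walk V E a c (\<not> p) (insert c S)"

lemma parity_walk_vertices: "parity_walk V E a b p S \<Longrightarrow> a \<in> S \<and> b \<in> S \<and> S \<subseteq> V"
  by (induction rule: parity_walk.induct) auto

lemma is_walk_imp_parity_walk:
  "is_walk V E xs \<Longrightarrow> parity_walk V E (hd xs) (last xs) (odd (walk_length xs)) (set xs)"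
proof (induction xs rule: rev_induct)
  case Nil
  then show ?case by (simp add: is_walk_def)
next
  case (snoc x xs)
  show ?case
  proof (cases "xs = []")
    case True
    then show ?thesis
      using snoc.prems by (auto simp: is_walk_def walk_length_def intro: parity_walk_single)
  next
    case False
    with snoc.prems have "is_walk V E xs" "E (last xs) x" "x \<in> V"
      by (auto simp: is_walk_def successively_append_iff)
    from parity_walk_snoc[OF snoc.IH[OF this(1)] this(2,3)] False show ?thesis
      by (auto simp: walk_length_def hd_append)
  qed
qed

lemma parity_walk_imp_is_walk:
  "parity_walk V E a b p S \<Longrightarrow>
    \<exists>xs. is_walk V E xs \<and> hd xs = a \<and> last xs = b \<and> odd (walk_length xs) = p \<and> set xs = S"
proof (induction rule: parity_walk.induct)
  case (parity_walk_single a)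
  then show ?case by (intro exI[of _ "[a]"]) (auto simp: is_walk_def walk_length_def)
next
  case (parity_walk_snoc a b p S c)
  then obtain xs where xs: "is_walk V E xs" "hd xs = a" "last xs = b" "odd (walk_length xs) = p"
    "set xs = S" by blast
  then have "xs \<noteq> []" by (auto simp: is_walk_def)
  with xs parity_walk_snoc.hyps show ?case
    by (intro exI[of _ "xs @ [c]"])
      (auto simp: is_walk_def walk_length_def successively_append_iff hd_append)
qed

lemma closed_odd_walk_iff_parity_walk:
  "(\<exists>F. closed_odd_walk V E F \<and> P (set F)) \<longleftrightarrow> (\<exists>a S. parity_walk V E a a True S \<and> P S)"
proof
  assume "\<exists>F. closed_odd_walk V E F \<and> P (set F)"
  then show "\<exists>a S. parity_walk V E a a True S \<and> P S"
    using is_walk_imp_parity_walk by (fastforce simp: closed_odd_walk_def)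
next
  assume "\<exists>a S. parity_walk V E a a True S \<and> P S"
  then show "\<exists>F. closed_odd_walk V E F \<and> P (set F)"
    using parity_walk_imp_is_walk by (fastforce simp: closed_odd_walk_def)
qed

lemma parity_walk_trans:
  assumes "parity_walk V E a b p S" and "parity_walk V E b c q T"
  shows "parity_walk V E a c (p \<noteq> q) (S \<union> T)"
  using assms(2,1)
proof (induction rule: parity_walk.induct)
  case (parity_walk_single b)
  then show ?case using parity_walk_vertices[OF parity_walk_single.prems] by (simp add: insert_absorb)
next
  case (parity_walk_snoc b c q T d)
  from parity_walk.parity_walk_snoc[OF parity_walk_snoc.IH[OF parity_walk_snoc.prems] parity_walk_snoc.hyps(2,3)]
  show ?case by simp
qed

lemma parity_walk_edge: "E a b \<Longrightarrow> a \<in> V \<Longrightarrow> b \<in> V \<Longrightarrow> parity_walk V E a b True {a, b}"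
  using parity_walk_snoc[OF parity_walk_single, of a V E b] by (simp add: insert_commute)

lemma parity_walk_rev:
  assumes "parity_walk V E a b p S" and "\<And>x y. E x y \<Longrightarrow> E y x"
  shows "parity_walk V E b a p S"
  using assms(1)
proof (induction rule: parity_walk.induct)
  case (parity_walk_single a)
  then show ?case by (rule parity_walk.parity_walk_single)
next
  case (parity_walk_snoc a b p S c)
  have "parity_walk V E c b True {c, b}"
    using parity_walk_edge[of E c b V, OF assms(2)[OF parity_walk_snoc.hyps(2)]] parity_walk_snoc.hyps(3)
      parity_walk_vertices[OF parity_walk_snoc.hyps(1)]
    by blast
  from parity_walk_trans[OF this parity_walk_snoc.IH] show ?case
    using parity_walk_vertices[OF parity_walk_snoc.hyps(1)] by (simp add: insert_absorb)
qed

lemma parity_walk_split: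
  "parity_walk V E a b p S \<Longrightarrow> k \<in> S \<Longrightarrow>
    \<exists>p1 p2 S1 S2. parity_walk V E a k p1 S1 \<and> parity_walk V E k b p2 S2 \<and> S1 \<union> S2 = S \<and> p = (p1 \<noteq> p2)"
proof (induction rule: parity_walk.induct)
  case (parity_walk_single a)
  then show ?case using parity_walk.parity_walk_single[of a V E] by blast
next
  case (parity_walk_snoc a b p S c)
  show ?case
  proof (cases "k = c")
    case True
    with parity_walk.parity_walk_snoc[OF parity_walk_snoc.hyps]
      parity_walk.parity_walk_single[OF parity_walk_snoc.hyps(3)]
    show ?thesis by (intro exI[of _ "\<not> p"] exI[of _ False]) auto
  next
    case False
    with parity_walk_snoc obtain p1 p2 S1 S2 where
      "parity_walk V E a k p1 S1" "parity_walk V E k b p2 S2" "S1 \<union> S2 = S" "p = (p1 \<noteq> p2)"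
      by auto
    with parity_walk.parity_walk_snoc[OF this(2) parity_walk_snoc.hyps(2,3)] show ?thesis
      by (intro exI[of _ p1] exI[of _ "\<not> p2"]) auto
  qed
qed

lemma parity_walk_rotate:
  assumes "parity_walk V E a a p S" and "k \<in> S"
  shows "parity_walk V E k k p S"
proof -
  obtain p1 p2 S1 S2 where "parity_walk V E a k p1 S1" "parity_walk V E k a p2 S2"
    "S1 \<union> S2 = S" "p = (p1 \<noteq> p2)"
    using parity_walk_split[OF assms] by blast
  moreover have "S2 \<union> S1 = S" "(p2 \<noteq> p1) = p" using \<open>S1 \<union> S2 = S\<close> \<open>p = (p1 \<noteq> p2)\<close> by auto
  ultimately show ?thesis using parity_walk_trans[of V E k a p2 S2 k p1 S1] by simp
qed

lemma parity_walk_parity_by_coloring: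
  "parity_walk V E a b p S \<Longrightarrow> proper_2col E S f \<Longrightarrow> p = (f a \<noteq> f b)"
proof (induction rule: parity_walk.induct)
  case (parity_walk_single a)
  then show ?case by simp
next
  case (parity_walk_snoc a b p S c)
  then have "p = (f a \<noteq> f b)" by (auto simp: proper_2col_def)
  moreover have "f b \<noteq> f c"
    using parity_walk_snoc parity_walk_vertices[OF parity_walk_snoc.hyps(1)]
    by (auto simp: proper_2col_def)
  ultimately show ?case by auto
qed

lemma odd_closed_parity_walk_not_2col: "parity_walk V E a a True S \<Longrightarrow> \<not> proper_2col E S f"
  using parity_walk_parity_by_coloring[of V E a a True S f] by blast

locale odd_cycle_cut_reduction =
  fixes V :: "'a set" and E :: "'a \<Rightarrow> 'a \<Rightarrow> bool" and XB XC XR Bs :: "'a set"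
  assumes graph: "simple_graph V E"
    and occ: "is_OCC V E XB XC XR"
    and Bs_subset: "Bs \<subseteq> XB"
begin

(* The kept vertices V(G) \<inter> V(G'), embedded into G' by Old. *)
abbreviation K :: "'a set" where
  "K \<equiv> V - (XB - Bs)"

abbreviation V' :: "'a rvert set" where
  "V' \<equiv> red_V V E XB XC Bs"

abbreviation E' :: "'a rvert \<Rightarrow> 'a rvert \<Rightarrow> bool" where
  "E' \<equiv> red_E V E XB XC Bs"

lemma edge_sym: "E u w \<Longrightarrow> E w u"
  using graph by (auto simp: simple_graph_def)

lemma edge_in_V: "E u w \<Longrightarrow> u \<in> V \<and> w \<in> V"
  using graph by (auto simp: simple_graph_def)

lemma terminals_kept: "XC \<union> Bs \<subseteq> K"
  using occ Bs_subset by (auto simp: is_OCC_def)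

lemma kept_neighbour_of_deleted: "E x y \<Longrightarrow> x \<in> XB - Bs \<Longrightarrow> y \<in> K \<Longrightarrow> y \<in> XC \<union> Bs"
  using occ edge_in_V[of x y] by (auto simp: is_OCC_def)

lemma Old_in_red_V [simp]: "Old x \<in> V' \<longleftrightarrow> x \<in> K"
  by (auto simp: red_V_def)

lemma New_in_red_V [simp]:
  "New P q c k \<in> V' \<longleftrightarrow> gadget E XB XC Bs P q \<and> c < 2 \<and> k < (if q then 2 else 1)"
  by (auto simp: red_V_def)

lemma red_E_sym: "E' x y \<Longrightarrow> E' y x"
  by (auto simp: red_E_def)

lemma red_E_Old_Old [simp]: "E' (Old a) (Old b) \<longleftrightarrow> a \<in> K \<and> b \<in> K \<and> E a b"
  using edge_sym by (auto simp: red_E_def)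

lemma red_E_Old_New [simp]: "E' (Old a) (New P q c k) \<longleftrightarrow> E' (New P q c k) (Old a)"
  using red_E_sym by blast

lemma red_E_New_Old [simp]: "E' (New P q c k) (Old a) \<longleftrightarrow> red_base V E XB XC Bs (New P q c k) (Old a)"
  by (cases q) (auto simp: red_E_def)

lemma red_E_New_New [simp]:
  "E' (New P q c k) (New P' q' c' k') \<longleftrightarrow>
    q \<and> q' \<and> P' = P \<and> c' = c \<and> c < 2 \<and> gadget E XB XC Bs P True \<and>
    (k = 0 \<and> k' = 1 \<or> k = 1 \<and> k' = 0)"
  by (cases q; cases q') (auto simp: red_E_def)

lemma rep_Upair: "Upair (fst (rep P)) (snd (rep P)) = P"
proof -
  obtain a b where "P = Upair a b" by (cases P)
  then have "(\<lambda>(a, b). P = Upair a b) (a, b)" by simp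
  then have "(\<lambda>(a, b). P = Upair a b) (rep P)" unfolding rep_def by (rule someI)
  then show ?thesis by (simp add: case_prod_beta)
qed

lemma gadget_ends: "gadget E XB XC Bs (Upair u v) p \<Longrightarrow> u \<in> XC \<union> Bs \<and> v \<in> XC \<union> Bs"
  by (auto simp: gadget_def)

lemma inner_walk_imp_parity_walk:
  assumes "has_inner_walk E (XB - Bs) u v p" and "u \<in> K" and "v \<in> K"
  shows "\<exists>T. parity_walk V E u v p T \<and> T \<inter> K = {u, v}"
proof -
  obtain ws where ws: "set ws \<subseteq> XB - Bs" "successively E (u # ws @ [v])"
    "odd (walk_length (u # ws @ [v])) = p"
    using assms(1) unfolding has_inner_walk_def by blast
  then have "is_walk V E (u # ws @ [v])"
    using assms(2,3) Bs_subset occ by (auto simp: is_walk_def is_OCC_def)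
  from is_walk_imp_parity_walk[OF this] ws assms(2,3) show ?thesis
    by (intro exI[of _ "set (u # ws @ [v])"]) auto
qed

lemma gadget_imp_parity_walk:
  assumes "gadget E XB XC Bs (Upair u v) p"
  shows "\<exists>T. parity_walk V E u v p T \<and> T \<inter> K = {u, v}"
proof -
  obtain u' v' where uv': "Upair u v = Upair u' v'" "has_inner_walk E (XB - Bs) u' v' p"
    "u' \<in> K" "v' \<in> K"
    using assms terminals_kept unfolding gadget_def by blast
  then obtain T where T: "parity_walk V E u' v' p T" "T \<inter> K = {u', v'}"
    using inner_walk_imp_parity_walk by blast
  from uv'(1) show ?thesis
  proof (simp only: Upair_inject, elim disjE conjE)
    assume "u = u'" "v = v'"
    with T show ?thesis by blast
  next
    assume "u = v'" "v = u'"
    with T parity_walk_rev[OF T(1) edge_sym] show ?thesis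
      by (intro exI[of _ T]) (simp add: insert_commute)
  qed
qed

lemma gadget_imp_red_walk_rep:
  assumes "gadget E XB XC Bs P p" and "rep P = (c, d)"
  shows "\<exists>T. parity_walk V' E' (Old c) (Old d) p T \<and> Old -` T = {c, d}"
proof -
  have "Upair c d = P" using rep_Upair[of P] assms(2) by simp
  then have cd: "c \<in> K" "d \<in> K"
    using gadget_ends[of c d p] assms(1) terminals_kept by auto
  show ?thesis
  proof (cases p)
    case False
    with assms cd have "is_walk V' E' [Old c, New P False 0 0, Old d]"
      by (simp add: is_walk_def)
    from is_walk_imp_parity_walk[OF this] False show ?thesis
      by (intro exI) (auto simp: walk_length_def)
  next
    case True
    with assms cd have "is_walk V' E' [Old c, New P True 0 0, New P True 0 1, Old d]"
      by (simp add: is_walk_def)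
    from is_walk_imp_parity_walk[OF this] True show ?thesis
      by (intro exI) (auto simp: walk_length_def)
  qed
qed

lemma gadget_imp_red_walk:
  assumes "gadget E XB XC Bs (Upair u v) p"
  shows "\<exists>T. parity_walk V' E' (Old u) (Old v) p T \<and> Old -` T = {u, v}"
proof -
  obtain c d where cd: "rep (Upair u v) = (c, d)" by (cases "rep (Upair u v)") blast
  obtain T where T: "parity_walk V' E' (Old c) (Old d) p T" "Old -` T = {c, d}"
    using gadget_imp_red_walk_rep[OF assms cd] by blast
  have "Upair c d = Upair u v" using rep_Upair[of "Upair u v"] unfolding cd by simp
  then show ?thesis
  proof (simp only: Upair_inject, elim disjE conjE)
    assume "c = u" "d = v"
    with T show ?thesis by blast
  next
    assume "c = v" "d = u"
    with T parity_walk_rev[OF T(1) red_E_sym] show ?thesis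
      by (intro exI[of _ T]) (simp add: insert_commute)
  qed
qed

section \<open>From walks in G to walks in G'\<close>

lemma excursion_imp_red_walk:
  assumes "set ws \<subseteq> XB - Bs" and "successively E (c # ws @ [d])" and "c \<in> K" and "d \<in> K"
  shows "\<exists>T. parity_walk V' E' (Old c) (Old d) (odd (length ws + 1)) T \<and> Old -` T = {c, d}"
proof (cases ws)
  case Nil
  with assms have "parity_walk V' E' (Old c) (Old d) True {Old c, Old d}"
    by (intro parity_walk_edge) auto
  with Nil show ?thesis by (intro exI[of _ "{Old c, Old d}"]) auto
next
  case (Cons w ws')
  have "E (last (c # ws)) d" "successively E (c # ws)"
    using assms(2) successively_append_iff[of E "c # ws" "[d]"] by auto
  with Cons have "E c w" "E (last ws) d" by auto
  moreover have "w \<in> XB - Bs" "last ws \<in> XB - Bs" using Cons assms(1) last_in_set[of ws] by auto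
  ultimately have "c \<in> XC \<union> Bs" "d \<in> XC \<union> Bs"
    using kept_neighbour_of_deleted edge_sym assms(3,4) by blast+
  moreover have "has_inner_walk E (XB - Bs) c d (odd (length ws + 1))"
    unfolding has_inner_walk_def using Cons assms(1,2)
    by (intro exI[of _ ws]) (auto simp: walk_length_def)
  ultimately have "gadget E XB XC Bs (Upair c d) (odd (length ws + 1))"
    unfolding gadget_def by blast
  then show ?thesis by (rule gadget_imp_red_walk)
qed

(* The walk from a to b is replayed in G' up to its last kept vertex c; the rest, ws, is an
  excursion through X_B - B* still waiting to be replaced by a gadget. *)
definition forward_simulated :: "'a \<Rightarrow> 'a \<Rightarrow> bool \<Rightarrow> 'a set \<Rightarrow> bool" where
  "forward_simulated a b p S \<longleftrightarrow>
    (\<exists>c q S' ws. parity_walk V' E' (Old a) (Old c) q S' \<and> Old -` S' = S \<inter> K \<and>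
      set ws \<subseteq> XB - Bs \<and> successively E (c # ws) \<and> last (c # ws) = b \<and> p = (q \<noteq> odd (length ws)))"

lemma forward_simulated_step_kept:
  assumes "forward_simulated a b p S" and "E b d" and "d \<in> K"
  shows "forward_simulated a d (\<not> p) (insert d S)"
proof -
  obtain c q S' ws where st: "parity_walk V' E' (Old a) (Old c) q S'" "Old -` S' = S \<inter> K"
    "set ws \<subseteq> XB - Bs" "successively E (c # ws)" "last (c # ws) = b" "p = (q \<noteq> odd (length ws))"
    using assms(1) unfolding forward_simulated_def by blast
  have "Old c \<in> S'" "S' \<subseteq> V'" using parity_walk_vertices[OF st(1)] by auto
  then have c: "c \<in> S \<inter> K" using st(2) by blast
  have "successively E (c # ws @ [d])"
    using st(4,5) assms(2) successively_append_iff[of E "c # ws" "[d]"] by simp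
  then obtain T where T: "parity_walk V' E' (Old c) (Old d) (odd (length ws + 1)) T"
    "Old -` T = {c, d}"
    using excursion_imp_red_walk[OF st(3) _ _ assms(3)] c by blast
  have "Old -` (S' \<union> T) = insert d S \<inter> K"
    using st(2) T(2) c assms(3) by auto
  with parity_walk_trans[OF st(1) T(1)] st(6) show ?thesis
    unfolding forward_simulated_def
    by (intro exI[of _ d] exI[of _ "q \<noteq> odd (length ws + 1)"] exI[of _ "S' \<union> T"] exI[of _ "[]"])
      auto
qed

lemma forward_simulated_step_deleted:
  assumes "forward_simulated a b p S" and "E b d" and "d \<in> XB - Bs"
  shows "forward_simulated a d (\<not> p) (insert d S)"
proof -
  obtain c q S' ws where st: "parity_walk V' E' (Old a) (Old c) q S'" "Old -` S' = S \<inter> K"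
    "set ws \<subseteq> XB - Bs" "successively E (c # ws)" "last (c # ws) = b" "p = (q \<noteq> odd (length ws))"
    using assms(1) unfolding forward_simulated_def by blast
  have "successively E (c # ws @ [d])"
    using st(4,5) assms(2) successively_append_iff[of E "c # ws" "[d]"] by simp
  with st assms(3) show ?thesis
    unfolding forward_simulated_def
    by (intro exI[of _ c] exI[of _ q] exI[of _ S'] exI[of _ "ws @ [d]"]) auto
qed

lemma parity_walk_forward_simulated:
  "parity_walk V E a b p S \<Longrightarrow> a \<in> K \<Longrightarrow> forward_simulated a b p S"
proof (induction rule: parity_walk.induct)
  case (parity_walk_single a)
  then have "parity_walk V' E' (Old a) (Old a) False {Old a}"
    by (intro parity_walk.parity_walk_single) simp
  with parity_walk_single.prems show ?case
    unfolding forward_simulated_def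
    by (intro exI[of _ a] exI[of _ False] exI[of _ "{Old a}"] exI[of _ "[]"]) auto
next
  case (parity_walk_snoc a b p S d)
  show ?case
  proof (cases "d \<in> K")
    case True
    with parity_walk_snoc show ?thesis by (blast intro: forward_simulated_step_kept)
  next
    case False
    with parity_walk_snoc show ?thesis by (blast intro: forward_simulated_step_deleted)
  qed
qed

section \<open>From walks in G' to walks in G\<close>

(* r is the parity of the distance from Old b to B, where B is Old b itself or a vertex of a gadget
  attached at b; New P q c 0 is adjacent to fst (rep P) and New P True c 1 to snd (rep P). *)
definition anchored :: "'a \<Rightarrow> 'a rvert \<Rightarrow> bool \<Rightarrow> bool" where
  "anchored b B r \<longleftrightarrow> B = Old b \<and> b \<in> K \<and> \<not> r \<or>
    (\<exists>P q c k. B = New P q c k \<and> B \<in> V' \<and>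
      (b = fst (rep P) \<and> r = (k = 0) \<or> b = snd (rep P) \<and> r = (k = (if q then 1 else 0))))"

lemma anchored_Old [simp]: "anchored b (Old a) r \<longleftrightarrow> a = b \<and> b \<in> K \<and> \<not> r"
  unfolding anchored_def by blast

lemma anchored_New [simp]:
  "anchored b (New P q c k) r \<longleftrightarrow> New P q c k \<in> V' \<and>
    (b = fst (rep P) \<and> r = (k = 0) \<or> b = snd (rep P) \<and> r = (k = (if q then 1 else 0)))"
  unfolding anchored_def by blast

lemma anchored_step_New:
  assumes "anchored b B r" and "E' B (New P q c k)"
  shows "anchored b (New P q c k) (\<not> r)"
proof (cases B)
  case (Old a)
  with assms show ?thesis by (cases q) auto
next
  case (New P' q' c' k')
  with assms show ?thesis by auto
qed

lemma anchored_exit_cases: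
  assumes "anchored b B r" and "E' B (Old d)"
  shows "d = b \<and> b \<in> K \<and> r \<or> E b d \<and> b \<in> K \<and> d \<in> K \<and> \<not> r \<or> gadget E XB XC Bs (Upair b d) (\<not> r)"
proof (cases B)
  case (Old a)
  with assms show ?thesis by auto
next
  case (New P q c k)
  obtain x y where xy: "rep P = (x, y)" by (cases "rep P") blast
  then have P: "P = Upair x y" using rep_Upair[of P] by simp
  from assms New have g: "gadget E XB XC Bs P q" by simp
  then have "x \<in> K" "y \<in> K" using gadget_ends[of x y q] P terminals_kept by auto
  moreover have "gadget E XB XC Bs (Upair y x) q" using g P by (metis Upair_inject)
  ultimately show ?thesis using assms New xy P g by (cases q) auto
qed

lemma anchored_exit:
  assumes "anchored b B r" and "E' B (Old d)"
  shows "\<exists>T. parity_walk V E b d (\<not> r) T \<and> T \<inter> K = {b, d}"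
  using anchored_exit_cases[OF assms]
proof (elim disjE conjE)
  assume "d = b" "b \<in> K" "r"
  then show ?thesis using parity_walk_single[of b V E] by auto
next
  assume "E b d" "b \<in> K" "d \<in> K" "\<not> r"
  then show ?thesis using parity_walk_edge[of E b d V] by auto
next
  assume "gadget E XB XC Bs (Upair b d) (\<not> r)"
  then show ?thesis by (rule gadget_imp_parity_walk)
qed

(* The walk from Old a to B is lifted to a walk of G from a to the kept vertex b at which it
  last entered the gadget containing B (or to b itself if B = Old b). *)
definition backward_simulated :: "'a \<Rightarrow> 'a rvert \<Rightarrow> bool \<Rightarrow> 'a rvert set \<Rightarrow> bool" where
  "backward_simulated a B p S' \<longleftrightarrow>
    (\<exists>b q S r. parity_walk V E a b q S \<and> S \<inter> K = Old -` S' \<and> anchored b B r \<and> p = (q \<noteq> r))"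

lemma backward_simulated_step_Old:
  assumes "backward_simulated a B p S'" and "E' B (Old d)"
  shows "backward_simulated a (Old d) (\<not> p) (insert (Old d) S')"
proof -
  obtain b q S r where st: "parity_walk V E a b q S" "S \<inter> K = Old -` S'" "anchored b B r"
    "p = (q \<noteq> r)"
    using assms(1) unfolding backward_simulated_def by blast
  obtain T where T: "parity_walk V E b d (\<not> r) T" "T \<inter> K = {b, d}"
    using anchored_exit[OF st(3) assms(2)] by blast
  have "b \<in> S \<inter> K" using parity_walk_vertices[OF st(1)] T(2) by blast
  then have "(S \<union> T) \<inter> K = insert d (S \<inter> K)" by (auto simp: Int_Un_distrib2 T(2))
  with st(2) have "(S \<union> T) \<inter> K = Old -` insert (Old d) S'" by auto
  with parity_walk_trans[OF st(1) T(1)] st(4) T(2) show ?thesis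
    unfolding backward_simulated_def
    by (intro exI[of _ d] exI[of _ "q \<noteq> (\<not> r)"] exI[of _ "S \<union> T"] exI[of _ False]) auto
qed

lemma backward_simulated_step_New:
  assumes "backward_simulated a B p S'" and "E' B (New P q c k)"
  shows "backward_simulated a (New P q c k) (\<not> p) (insert (New P q c k) S')"
proof -
  obtain b q' S r where st: "parity_walk V E a b q' S" "S \<inter> K = Old -` S'" "anchored b B r"
    "p = (q' \<noteq> r)"
    using assms(1) unfolding backward_simulated_def by blast
  with anchored_step_New[OF st(3) assms(2)] show ?thesis
    unfolding backward_simulated_def
    by (intro exI[of _ b] exI[of _ q'] exI[of _ S] exI[of _ "\<not> r"]) auto
qed

lemma red_parity_walk_backward_simulated:
  "parity_walk V' E' A B p S' \<Longrightarrow> A = Old a \<Longrightarrow> a \<in> K \<Longrightarrow> backward_simulated a B p S'"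
proof (induction rule: parity_walk.induct)
  case (parity_walk_single A)
  then have "parity_walk V E a a False {a}" by (intro parity_walk.parity_walk_single) simp
  with parity_walk_single show ?case
    unfolding backward_simulated_def
    by (intro exI[of _ a] exI[of _ False] exI[of _ "{a}"] exI[of _ False]) auto
next
  case (parity_walk_snoc A B p S' C)
  then have "backward_simulated a B p S'" by blast
  with parity_walk_snoc.hyps(2) show ?case
    by (cases C) (auto intro: backward_simulated_step_Old backward_simulated_step_New)
qed

lemma odd_closed_walk_meets_kept:
  assumes "proper_2col E XB f" and "parity_walk V E a a True S"
  shows "S \<inter> K \<noteq> {}"
proof
  assume "S \<inter> K = {}"
  then have "S \<subseteq> XB" using parity_walk_vertices[OF assms(2)] by blast
  with assms(1) have "proper_2col E S f" by (auto simp: proper_2col_def)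
  with odd_closed_parity_walk_not_2col[OF assms(2)] show False by blast
qed

lemma red_odd_closed_walk_meets_kept:
  assumes "parity_walk V' E' A A True S'"
  shows "Old -` S' \<noteq> {}"
proof
  assume no_Old: "Old -` S' = {}"
  define level :: "'a rvert \<Rightarrow> bool" where
    "level x = (case x of Old _ \<Rightarrow> False | New _ _ _ k \<Rightarrow> k = 1)" for x
  have "proper_2col E' S' level"
    unfolding proper_2col_def
  proof (intro ballI impI)
    fix x y assume "x \<in> S'" "y \<in> S'" "E' x y"
    moreover obtain P q c k where "x = New P q c k" using \<open>x \<in> S'\<close> no_Old by (cases x) auto
    moreover obtain P' q' c' k' where "y = New P' q' c' k'" using \<open>y \<in> S'\<close> no_Old by (cases y) auto
    ultimately show "level x \<noteq> level y" by (auto simp: level_def)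
  qed
  with odd_closed_parity_walk_not_2col[OF assms] show False by blast
qed

lemma odd_closed_walk_reduces:
  assumes "proper_2col E XB f" and "parity_walk V E a a True S"
  shows "\<exists>A S'. parity_walk V' E' A A True S' \<and> Old -` S' = S \<inter> K"
proof -
  obtain k where k: "k \<in> S" "k \<in> K" using odd_closed_walk_meets_kept[OF assms] by blast
  have "forward_simulated k k True S"
    using parity_walk_forward_simulated[OF parity_walk_rotate[OF assms(2) k(1)] k(2)] .
  then obtain c q S' ws where st: "parity_walk V' E' (Old k) (Old c) q S'" "Old -` S' = S \<inter> K"
    "set ws \<subseteq> XB - Bs" "last (c # ws) = k" "True = (q \<noteq> odd (length ws))"
    unfolding forward_simulated_def by blast
  have "ws = []"
    using st(3,4) k(2) last_in_set[of ws] by (cases "ws = []") auto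
  with st show ?thesis by auto
qed

lemma red_odd_closed_walk_lifts:
  assumes "parity_walk V' E' A A True S'"
  shows "\<exists>a S. parity_walk V E a a True S \<and> S \<inter> K = Old -` S'"
proof -
  obtain k where k: "Old k \<in> S'" using red_odd_closed_walk_meets_kept[OF assms] by blast
  then have "k \<in> K" using parity_walk_vertices[OF assms] by auto
  have "backward_simulated k (Old k) True S'"
    using red_parity_walk_backward_simulated[OF parity_walk_rotate[OF assms k] refl \<open>k \<in> K\<close>] .
  then obtain S where "parity_walk V E k k True S" "S \<inter> K = Old -` S'"
    unfolding backward_simulated_def by auto
  then show ?thesis by blast
qed

lemma odd_closed_walk_trace_iff:
  assumes "proper_2col E XB f"
  shows "(\<exists>a S. parity_walk V E a a True S \<and> S \<inter> K = Y) \<longleftrightarrow>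
    (\<exists>A S'. parity_walk V' E' A A True S' \<and> Old -` S' = Y)"
proof
  assume "\<exists>a S. parity_walk V E a a True S \<and> S \<inter> K = Y"
  then obtain a S where walk: "parity_walk V E a a True S" and "S \<inter> K = Y" by blast
  with odd_closed_walk_reduces[OF assms walk]
  show "\<exists>A S'. parity_walk V' E' A A True S' \<and> Old -` S' = Y" by simp
next
  assume "\<exists>A S'. parity_walk V' E' A A True S' \<and> Old -` S' = Y"
  then obtain A S' where walk: "parity_walk V' E' A A True S'" and "Old -` S' = Y" by blast
  with red_odd_closed_walk_lifts[OF walk]
  show "\<exists>a S. parity_walk V E a a True S \<and> S \<inter> K = Y" by simp
qed

lemma kept_trace_iff:
  assumes "S' \<subseteq> V'" and "Y \<subseteq> K"
  shows "S' \<inter> Old ` K = Old ` Y \<longleftrightarrow> Old -` S' = Y"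
proof -
  have "S' \<inter> Old ` K = Old ` (Old -` S')" using assms(1) by auto
  then show ?thesis using assms(2) by (auto simp: inj_image_eq_iff inj_def)
qed

end

theorem mainTheorem17:
  fixes V :: "'a set" and E :: "'a \<Rightarrow> 'a \<Rightarrow> bool"
    and XB XC XR Bs Y :: "'a set" and fX :: "'a \<Rightarrow> bool"
  assumes "simple_graph V E"
    and "is_OCC V E XB XC XR"
    and "proper_2col E XB fX"
    and "Bs \<subseteq> XB"
    and "star_prop E XB XC fX Bs"
    and "Y \<subseteq> V - (XB - Bs)"
  shows "(\<exists>F. closed_odd_walk V E F \<and> set F \<inter> (V - (XB - Bs)) = Y) \<longleftrightarrow>
         (\<exists>F'. closed_odd_walk (red_V V E XB XC Bs) (red_E V E XB XC Bs) F' \<and>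
               set F' \<inter> Old ` (V - (XB - Bs)) = Old ` Y)"
proof -
  interpret odd_cycle_cut_reduction V E XB XC XR Bs
    using assms(1,2,4) by unfold_locales
  have trace: "S' \<inter> Old ` K = Old ` Y \<longleftrightarrow> Old -` S' = Y"
    if "parity_walk V' E' A A True S'" for A S'
    using kept_trace_iff[OF _ assms(6)] parity_walk_vertices[OF that] by simp
  have "(\<exists>F. closed_odd_walk V E F \<and> set F \<inter> K = Y) \<longleftrightarrow>
      (\<exists>a S. parity_walk V E a a True S \<and> S \<inter> K = Y)"
    by (rule closed_odd_walk_iff_parity_walk)
  also have "\<dots> \<longleftrightarrow> (\<exists>A S'. parity_walk V' E' A A True S' \<and> Old -` S' = Y)"
    by (rule odd_closed_walk_trace_iff[OF assms(3)])
  also have "\<dots> \<longleftrightarrow> (\<exists>A S'. parity_walk V' E' A A True S' \<and> S' \<inter> Old ` K = Old ` Y)"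
    using trace by (simp cong: conj_cong)
  also have "\<dots> \<longleftrightarrow> (\<exists>F'. closed_odd_walk V' E' F' \<and> set F' \<inter> Old ` K = Old ` Y)"
    by (rule closed_odd_walk_iff_parity_walk[symmetric])
  finally show ?thesis .
qed

end
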